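(* For every integer $n \geq 2$, $D_n = (n-1)\left[D_{n-1} + D_{n-2}\right] + (-1)^{n-1}$, with the convention $D_0 = 0$.
   Context: A linear arrangement of $\{1,\ldots,n\}$ is a sequence $a_1\cdots a_n$ in which each of $1,\ldots,n$ appears exactly once. It contains the pattern $ij$ if $a_t=i$ and $a_{t+1}=j$ for some $t$; otherwise it avoids it. $D_n$ is the number of linear arrangements of $\{1,\ldots,n\}$ avoiding all of the patterns $12, 23, \ldots, (n-1)n, n1$; $D_0=0$. *)

theory Defs
  imports Main
begin

definition arrangements :: "nat \<Rightarrow> nat list set" where
  "arrangements n = {xs. distinct xs \<and> set xs = {1..n}}"

definition contains_pattern :: "nat list \<Rightarrow> nat \<Rightarrow> nat \<Rightarrow> bool" where
  "contains_pattern xs i j \<longleftrightarrow> (\<exists>t. Suc t < length xs \<and> xs ! t = i \<and> xs ! Suc t = j)"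

definition forbidden_patterns :: "nat \<Rightarrow> (nat \<times> nat) set" where
  "forbidden_patterns n = {(i, i + 1) | i. 1 \<le> i \<and> i < n} \<union> {(n, 1)}"

definition D :: "nat \<Rightarrow> nat" where
  "D n = (if n = 0 then 0 else
     card {xs \<in> arrangements n. \<forall>(i, j) \<in> forbidden_patterns n. \<not> contains_pattern xs i j})"

end

theory Submission
  imports Defs
begin

text \<open>
  Call a cyclic succession of an arrangement of \<open>{1..n}\<close> an entry \<open>x\<close> immediately followed by
  \<open>x + 1\<close> (or by \<open>1\<close> if \<open>x = n\<close>), and let \<open>G n\<close> count the arrangements without any, so that
  \<open>D n = G n\<close> for \<open>n \<ge> 1\<close>. Every arrangement of \<open>{1..m+1}\<close> arises in exactly one way by
  inserting \<open>m + 1\<close> into a gap of an arrangement of \<open>{1..m}\<close> with succession set \<open>B\<close>, and the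
  result is succession-free iff the gap splits the only member of \<open>B - {m}\<close> (if any) and lies
  neither right after \<open>m\<close> nor right before \<open>1\<close>. Counting gaps gives
  \<open>G (m+1) = (m-1) G m + m #{B = {m}} + #{|B - {m}| = 1}\<close>. Deleting \<open>m\<close> from an arrangement in
  which \<open>m\<close> is followed by \<open>1\<close> turns the succession \<open>(m-1) m\<close> into \<open>(m-1) 1\<close> and leaves the
  others unchanged, and relabelling \<open>x \<mapsto> x + 1\<close> cyclically shows that all singleton succession
  sets \<open>{u}\<close> are equally frequent; hence every count above is expressed through \<open>G\<close>, giving
  \<open>G (m+1) = (m-1) G m + (2m-1) G (m-1) + (m-1) G (m-2)\<close>.
\<close>

fun successions :: "('a \<Rightarrow> 'a) \<Rightarrow> 'a list \<Rightarrow> 'a set" where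
  "successions f (x # y # zs) =
     (if y = f x then insert x (successions f (y # zs)) else successions f (y # zs))"
| "successions f _ = {}"

lemma successions_Cons:
  "successions f (x # xs) = successions f xs \<union> (if xs \<noteq> [] \<and> hd xs = f x then {x} else {})"
  by (cases xs) auto

lemma successions_append:
  "successions f (as @ bs) = successions f as \<union> successions f bs \<union>
     (if as \<noteq> [] \<and> bs \<noteq> [] \<and> hd bs = f (last as) then {last as} else {})"
  by (induction as) (auto simp: successions_Cons)

lemma mem_successions_iff:
  "x \<in> successions f xs \<longleftrightarrow> (\<exists>t. Suc t < length xs \<and> xs ! t = x \<and> xs ! Suc t = f x)"
proof (induction xs)
  case Nil
  then show ?case by simp
next
  case (Cons a xs)
  have ex_nat: "(\<exists>t. P t) \<longleftrightarrow> P 0 \<or> (\<exists>t. P (Suc t))" for P :: "nat \<Rightarrow> bool"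
    by (metis not0_implies_Suc)
  show ?case
    unfolding successions_Cons Un_iff Cons.IH by (subst ex_nat) (cases xs; auto)
qed

lemma successions_subset_butlast: "successions f xs \<subseteq> set (butlast xs)"
proof
  fix x assume "x \<in> successions f xs"
  then obtain t where "Suc t < length xs" "xs ! t = x" by (auto simp: mem_successions_iff)
  then show "x \<in> set (butlast xs)"
    by (metis Suc_lessD diff_Suc_1 in_set_conv_nth length_butlast less_diff_conv nth_butlast Suc_eq_plus1)
qed

lemma successions_subset: "successions f xs \<subseteq> set xs"
  using successions_subset_butlast in_set_butlastD by fast

lemma successor_not_outside_tl:
  assumes "a \<notin> set (tl xs)" "x \<in> successions f xs"
  shows "f x \<noteq> a"
proof -
  obtain t where t: "Suc t < length xs" "xs ! Suc t = f x"
    using assms(2) by (auto simp: mem_successions_iff)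
  then have "xs ! Suc t \<in> set (tl xs)" by (metis Suc_less_eq2 diff_Suc_1 length_tl nth_mem nth_tl)
  then show ?thesis using t assms(1) by auto
qed

lemma successions_map:
  assumes "\<forall>x\<in>set xs. \<forall>y\<in>set xs. g y = f' (g x) \<longleftrightarrow> y = f x"
  shows "successions f' (map g xs) = g ` successions f xs"
  using assms
proof (induction xs)
  case Nil
  then show ?case by simp
next
  case (Cons a xs)
  have "(map g xs \<noteq> [] \<and> hd (map g xs) = f' (g a)) \<longleftrightarrow> (xs \<noteq> [] \<and> hd xs = f a)"
    using Cons.prems by (cases xs) auto
  then show ?case using Cons by (simp add: successions_Cons image_Un)
qed

lemma mem_arrangements_iff: "xs \<in> arrangements n \<longleftrightarrow> distinct xs \<and> set xs = {1..n}"
  by (simp add: arrangements_def)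

lemma length_arrangement: "xs \<in> arrangements n \<Longrightarrow> length xs = n"
  by (metis mem_arrangements_iff card_atLeastAtMost diff_Suc_1 distinct_card)

lemma finite_arrangements: "finite (arrangements n)"
proof -
  have "arrangements n \<subseteq> {xs. set xs \<subseteq> {1..n} \<and> length xs = n}"
    using length_arrangement by (auto simp: mem_arrangements_iff)
  then show ?thesis using finite_lists_length_eq[of "{1..n}" n] finite_subset by blast
qed

lemma successions_arrangement_subset: "xs \<in> arrangements n \<Longrightarrow> successions f xs \<subseteq> {1..n}"
  using successions_subset by (fastforce simp: mem_arrangements_iff)

lemma bij_betw_map_arrangements:
  assumes "bij_betw g {1..n} {1..n}"
  shows "bij_betw (map g) (arrangements n) (arrangements n)"
proof (rule bij_betw_byWitness[where f' = "map (inv_into {1..n} g)"])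
  have inv: "bij_betw (inv_into {1..n} g) {1..n} {1..n}"
    using assms by (rule bij_betw_inv_into)
  show "\<forall>xs\<in>arrangements n. map (inv_into {1..n} g) (map g xs) = xs"
    using assms by (auto simp: mem_arrangements_iff bij_betw_def intro: map_idI)
  show "\<forall>xs\<in>arrangements n. map g (map (inv_into {1..n} g) xs) = xs"
    using assms by (auto simp: mem_arrangements_iff bij_betw_def f_inv_into_f intro: map_idI)
  show "map g ` arrangements n \<subseteq> arrangements n"
    using assms by (auto simp: mem_arrangements_iff bij_betw_def distinct_map inj_on_subset)
  show "map (inv_into {1..n} g) ` arrangements n \<subseteq> arrangements n"
    using inv by (auto simp: mem_arrangements_iff bij_betw_def distinct_map inj_on_subset)
qed

lemma arrangements_1: "arrangements 1 = {[1]}"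
proof -
  have "xs = [1]" if xs: "xs \<in> arrangements 1" for xs
  proof -
    obtain a where "xs = [a]"
      using length_arrangement[OF xs] by (auto simp: length_Suc_conv)
    then show ?thesis using xs by (simp add: mem_arrangements_iff)
  qed
  then show ?thesis by (auto simp: mem_arrangements_iff)
qed

lemma arrangements_2: "arrangements 2 = {[1, 2], [2, 1]}"
proof -
  have two: "{1..2::nat} = {1, 2}" by auto
  have "xs = [1, 2] \<or> xs = [2, 1]" if xs: "xs \<in> arrangements 2" for xs
  proof -
    obtain a b where ab: "xs = [a, b]"
      using length_arrangement[OF xs] by (auto simp: length_Suc_conv numeral_2_eq_2)
    then have "{a, b} = {1, 2::nat}" using xs two by (simp add: mem_arrangements_iff)
    then show ?thesis using ab by (auto simp: doubleton_eq_iff)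
  qed
  then have "arrangements 2 \<subseteq> {[1, 2], [2, 1]}" by blast
  moreover have "{[1, 2], [2, 1]} \<subseteq> arrangements 2" using two by (auto simp: mem_arrangements_iff)
  ultimately show ?thesis by blast
qed

lemma insert_max_arrangement_iff:
  "as @ Suc m # bs \<in> arrangements (Suc m) \<longleftrightarrow> as @ bs \<in> arrangements m"
proof -
  have "set (as @ Suc m # bs) = insert (Suc m) (set (as @ bs))"
    "distinct (as @ Suc m # bs) \<longleftrightarrow> Suc m \<notin> set (as @ bs) \<and> distinct (as @ bs)"
    by auto
  moreover have "{1..Suc m} = insert (Suc m) {1..m}" "Suc m \<notin> {1..m}" by auto
  ultimately show ?thesis unfolding mem_arrangements_iff by (metis insert_ident)
qed

definition cyc_succ :: "nat \<Rightarrow> nat \<Rightarrow> nat" where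
  "cyc_succ n x = (if x = n then 1 else x + 1)"

abbreviation cyc_successions :: "nat \<Rightarrow> nat list \<Rightarrow> nat set" where
  "cyc_successions n xs \<equiv> successions (cyc_succ n) xs"

definition succ_free :: "nat \<Rightarrow> nat list set" where
  "succ_free n = {xs \<in> arrangements n. cyc_successions n xs = {}}"

lemma cyc_succ_in_range: "x \<in> {1..n} \<Longrightarrow> cyc_succ n x \<in> {1..n}"
  by (auto simp: cyc_succ_def)

lemma cyc_succ_eq_1_iff: "x \<in> {1..n} \<Longrightarrow> cyc_succ n x = 1 \<longleftrightarrow> x = n"
  by (auto simp: cyc_succ_def)

lemma inj_on_cyc_succ: "inj_on (cyc_succ n) {1..n}"
  by (auto simp: inj_on_def cyc_succ_def split: if_splits)

lemma bij_betw_cyc_succ: "bij_betw (cyc_succ n) {1..n} {1..n}"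
proof -
  have "cyc_succ n ` {1..n} \<subseteq> {1..n}" using cyc_succ_in_range by blast
  then show ?thesis using inj_on_cyc_succ by (simp add: bij_betw_def endo_inj_surj)
qed

lemma cyc_successions_Suc:
  assumes "set xs \<subseteq> {1..m}"
  shows "cyc_successions (Suc m) xs = cyc_successions m xs - {m}"
proof -
  have "(Suc t < length xs \<and> xs ! t = x \<and> xs ! Suc t = cyc_succ (Suc m) x) \<longleftrightarrow>
        (Suc t < length xs \<and> xs ! t = x \<and> xs ! Suc t = cyc_succ m x) \<and> x \<noteq> m" for t x
  proof (cases "Suc t < length xs")
    case True
    then have "xs ! t \<in> set xs" "xs ! Suc t \<in> set xs" by simp_all
    then have "xs ! t \<in> {1..m}" "xs ! Suc t \<in> {1..m}" using assms by blast+
    then show ?thesis by (auto simp: cyc_succ_def)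
  qed simp
  then show ?thesis unfolding set_eq_iff Diff_iff singleton_iff mem_successions_iff by blast
qed

lemma cyc_successions_Suc_no_wrap:
  assumes "set xs \<subseteq> {1..m}" "1 \<notin> set (tl xs)"
  shows "cyc_successions (Suc m) xs = cyc_successions m xs"
proof -
  have "m \<notin> cyc_successions m xs"
    using successor_not_outside_tl[OF assms(2)] by (fastforce simp: cyc_succ_def)
  then show ?thesis using cyc_successions_Suc[OF assms(1)] by blast
qed

lemma cyc_successions_remove_wrap:
  assumes arr: "as @ 1 # cs \<in> arrangements m"
  shows "cyc_successions (Suc m) (as @ Suc m # 1 # cs) - {Suc m} = cyc_successions m (as @ 1 # cs)"
proof -
  have set: "set as \<subseteq> {1..m}" "set (1 # cs) \<subseteq> {1..m}" and "1 \<notin> set as" "1 \<notin> set cs"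
    using arr by (auto simp: mem_arrangements_iff)
  then have "1 \<notin> set (tl as)" by (cases as) auto
  with set(1) have as: "cyc_successions (Suc m) as = cyc_successions m as"
    by (rule cyc_successions_Suc_no_wrap)
  have cs: "cyc_successions (Suc m) (1 # cs) = cyc_successions m (1 # cs)"
    using set(2) \<open>1 \<notin> set cs\<close> by (intro cyc_successions_Suc_no_wrap) auto
  have wrap: "cyc_successions (Suc m) (Suc m # 1 # cs) = insert (Suc m) (cyc_successions (Suc m) (1 # cs))"
    by (simp add: successions_Cons cyc_succ_def)
  have last: "(as \<noteq> [] \<and> Suc m = cyc_succ (Suc m) (last as)) \<longleftrightarrow>
              (as \<noteq> [] \<and> 1 = cyc_succ m (last as))"
  proof (cases "as = []")
    case False
    then have "last as \<in> {1..m}" using set(1) last_in_set by blast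
    then show ?thesis by (auto simp: cyc_succ_def)
  qed simp
  have "cyc_successions (Suc m) (as @ Suc m # 1 # cs) = cyc_successions (Suc m) as \<union>
      cyc_successions (Suc m) (Suc m # 1 # cs) \<union>
      (if as \<noteq> [] \<and> Suc m = cyc_succ (Suc m) (last as) then {last as} else {})"
    by (simp add: successions_append)
  also have "\<dots> = insert (Suc m) (cyc_successions m as \<union> cyc_successions m (1 # cs) \<union>
      (if as \<noteq> [] \<and> 1 = cyc_succ m (last as) then {last as} else {}))"
    unfolding as wrap cs last by auto
  also have "\<dots> = insert (Suc m) (cyc_successions m (as @ 1 # cs))"
    by (simp add: successions_append)
  moreover have "Suc m \<notin> cyc_successions m (as @ 1 # cs)"
    using successions_arrangement_subset[OF arr, of "cyc_succ m"] by auto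
  ultimately show ?thesis by simp
qed

fun insert_before :: "'a \<Rightarrow> 'a \<Rightarrow> 'a list \<Rightarrow> 'a list" where
  "insert_before x a [] = []"
| "insert_before x a (y # ys) = (if y = a then x # y # ys else y # insert_before x a ys)"

lemma insert_before_append: "a \<notin> set as \<Longrightarrow> insert_before x a (as @ a # cs) = as @ x # a # cs"
  by (induction as) auto

lemma card_wrap_succession:
  assumes "2 \<le> k"
  shows "card {ys \<in> arrangements k. k \<in> cyc_successions k ys \<and> Q (cyc_successions k ys - {k})}
       = card {zs \<in> arrangements (k - 1). Q (cyc_successions (k - 1) zs)}"
proof -
  obtain m where k: "k = Suc m" and m: "1 \<le> m" using assms by (cases k) auto
  let ?A = "{ys \<in> arrangements k. k \<in> cyc_successions k ys \<and> Q (cyc_successions k ys - {k})}"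
  let ?B = "{zs \<in> arrangements (k - 1). Q (cyc_successions (k - 1) zs)}"
  have remove: "remove1 k ys \<in> ?B \<and> insert_before k 1 (remove1 k ys) = ys" if ys: "ys \<in> ?A" for ys
  proof -
    obtain t where t: "Suc t < length ys" "ys ! t = k" "ys ! Suc t = 1"
      using ys by (auto simp: mem_successions_iff cyc_succ_def)
    then obtain as cs where ys_eq: "ys = as @ k # 1 # cs"
      by (metis Cons_nth_drop_Suc Suc_lessD append_take_drop_id)
    have arr: "as @ 1 # cs \<in> arrangements m"
      using ys ys_eq k insert_max_arrangement_iff[of as m "1 # cs"] by simp
    then have "1 \<notin> set as" "k \<notin> set (as @ 1 # cs)" using k by (auto simp: mem_arrangements_iff)
    then show ?thesis
      using ys ys_eq arr k cyc_successions_remove_wrap[OF arr]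
      by (simp add: remove1_append insert_before_append)
  qed
  have insert: "insert_before k 1 zs \<in> ?A \<and> remove1 k (insert_before k 1 zs) = zs" if zs: "zs \<in> ?B" for zs
  proof -
    have "1 \<in> set zs" using zs k m by (auto simp: mem_arrangements_iff)
    then obtain as cs where zs_eq: "zs = as @ 1 # cs" and "1 \<notin> set as"
      by (metis split_list_first)
    have arr: "as @ 1 # cs \<in> arrangements m" using zs zs_eq k by simp
    then have "k \<notin> set (as @ 1 # cs)" using k by (auto simp: mem_arrangements_iff)
    moreover have "k \<in> cyc_successions k (as @ k # 1 # cs)"
      by (simp add: successions_append successions_Cons cyc_succ_def)
    ultimately show ?thesis
      using zs zs_eq arr k cyc_successions_remove_wrap[OF arr] insert_max_arrangement_iff[of as m "1 # cs"]
        \<open>1 \<notin> set as\<close> by (simp add: remove1_append insert_before_append)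
  qed
  have "bij_betw (remove1 k) ?A ?B"
    by (rule bij_betw_byWitness[where f' = "insert_before k 1"]) (use remove insert in blast)+
  then show ?thesis by (rule bij_betw_same_card)
qed

lemma cyc_successions_rotate:
  assumes "xs \<in> arrangements n"
  shows "cyc_successions n (map (cyc_succ n) xs) = cyc_succ n ` cyc_successions n xs"
proof (rule successions_map, intro ballI)
  fix x y assume "x \<in> set xs" "y \<in> set xs"
  then have "y \<in> {1..n}" "cyc_succ n x \<in> {1..n}"
    using assms cyc_succ_in_range by (auto simp: mem_arrangements_iff)
  then show "cyc_succ n y = cyc_succ n (cyc_succ n x) \<longleftrightarrow> y = cyc_succ n x"
    by (rule inj_on_eq_iff[OF inj_on_cyc_succ])
qed

lemma card_singleton_rotate:
  assumes "u \<in> {1..n}"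
  shows "card {xs \<in> arrangements n. cyc_successions n xs = {cyc_succ n u}}
       = card {xs \<in> arrangements n. cyc_successions n xs = {u}}"
proof -
  have "cyc_successions n (map (cyc_succ n) xs) = {cyc_succ n u} \<longleftrightarrow> cyc_successions n xs = {u}"
    if xs: "xs \<in> arrangements n" for xs
  proof -
    have "cyc_successions n xs \<subseteq> {1..n}" by (rule successions_arrangement_subset[OF xs])
    then have "cyc_succ n ` cyc_successions n xs = cyc_succ n ` {u} \<longleftrightarrow> cyc_successions n xs = {u}"
      using assms by (intro inj_on_image_eq_iff[OF inj_on_cyc_succ]) auto
    then show ?thesis by (simp add: cyc_successions_rotate[OF xs])
  qed
  then have "bij_betw (map (cyc_succ n))
      {xs \<in> arrangements n. cyc_successions n xs = {u}}
      {xs \<in> arrangements n. cyc_successions n xs = {cyc_succ n u}}"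
    by (intro bij_betw_Collect bij_betw_map_arrangements bij_betw_cyc_succ)
  then show ?thesis by (simp add: bij_betw_same_card)
qed

lemma card_singleton_successions:
  assumes "2 \<le> k" "u \<in> {1..k}"
  shows "card {ys \<in> arrangements k. cyc_successions k ys = {u}} = card (succ_free (k - 1))"
proof -
  have "card {ys \<in> arrangements k. cyc_successions k ys = {u}}
      = card {ys \<in> arrangements k. cyc_successions k ys = {k}}"
  proof -
    have "u \<le> k" "1 \<le> u" using assms(2) by auto
    then show ?thesis
    proof (induction u rule: inc_induct)
      case (step u)
      then have "cyc_succ k u = Suc u" by (simp add: cyc_succ_def)
      then show ?case using step card_singleton_rotate[of u k] by simp
    qed simp
  qed
  also have "\<dots> = card {ys \<in> arrangements k. k \<in> cyc_successions k ys \<and> cyc_successions k ys - {k} = {}}"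
    by (intro arg_cong[where f = card]) blast
  also have "\<dots> = card (succ_free (k - 1))"
    using card_wrap_succession[OF assms(1), of "\<lambda>S. S = {}"] by (simp add: succ_free_def)
  finally show ?thesis .
qed

lemma card_some_singleton_successions:
  assumes "2 \<le> k" "U \<subseteq> {1..k}"
  shows "card {ys \<in> arrangements k. \<exists>u\<in>U. cyc_successions k ys = {u}} = card U * card (succ_free (k - 1))"
proof -
  have "finite U" using assms(2) finite_subset by blast
  have "{ys \<in> arrangements k. \<exists>u\<in>U. cyc_successions k ys = {u}}
      = (\<Union>u\<in>U. {ys \<in> arrangements k. cyc_successions k ys = {u}})"
    by blast
  also have "card \<dots> = (\<Sum>u\<in>U. card {ys \<in> arrangements k. cyc_successions k ys = {u}})"
    using \<open>finite U\<close> finite_arrangements by (intro card_UN_disjoint) auto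
  also have "\<dots> = (\<Sum>u\<in>U. card (succ_free (k - 1)))"
    using assms card_singleton_successions by (intro sum.cong) auto
  finally show ?thesis by simp
qed

lemma card_one_succession:
  assumes "2 \<le> k"
  shows "card {ys \<in> arrangements k. card (cyc_successions k ys) = 1} = k * card (succ_free (k - 1))"
proof -
  have "{ys \<in> arrangements k. card (cyc_successions k ys) = 1}
      = {ys \<in> arrangements k. \<exists>u\<in>{1..k}. cyc_successions k ys = {u}}"
    using successions_arrangement_subset by (fastforce simp: card_1_singleton_iff)
  then show ?thesis using card_some_singleton_successions[OF assms, of "{1..k}"] by simp
qed

lemma card_one_succession_not_max:
  assumes "2 \<le> k"
  shows "card {ys \<in> arrangements k. k \<notin> cyc_successions k ys \<and> card (cyc_successions k ys) = 1}
       = (k - 1) * card (succ_free (k - 1))"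
proof -
  have "{ys \<in> arrangements k. k \<notin> cyc_successions k ys \<and> card (cyc_successions k ys) = 1}
      = {ys \<in> arrangements k. \<exists>u\<in>{1..k - 1}. cyc_successions k ys = {u}}"
    using successions_arrangement_subset by (fastforce simp: card_1_singleton_iff)
  then show ?thesis using card_some_singleton_successions[OF assms, of "{1..k - 1}"] by simp
qed

definition insert_at :: "nat \<Rightarrow> 'a \<Rightarrow> 'a list \<Rightarrow> 'a list" where
  "insert_at k x xs = take k xs @ x # drop k xs"

lemma bij_betw_insert_max:
  "bij_betw (\<lambda>(ys, k). insert_at k (Suc m) ys) (arrangements m \<times> {..m}) (arrangements (Suc m))"
proof (rule bij_betw_imageI)
  show "inj_on (\<lambda>(ys, k). insert_at k (Suc m) ys) (arrangements m \<times> {..m})"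
  proof (rule inj_onI, clarify)
    fix ys k ys' k'
    assume ys: "ys \<in> arrangements m" "ys' \<in> arrangements m" and k: "k \<le> m" "k' \<le> m"
      and eq: "insert_at k (Suc m) ys = insert_at k' (Suc m) ys'"
    have "Suc m \<notin> set (take k ys)" "Suc m \<notin> set (drop k ys)"
      using ys(1) by (auto simp: mem_arrangements_iff dest: in_set_takeD in_set_dropD)
    then have "take k ys = take k' ys'" "drop k ys = drop k' ys'"
      using eq append_Cons_eq_iff by (fastforce simp: insert_at_def)+
    then show "ys = ys' \<and> k = k'"
      using ys k length_arrangement by (metis append_take_drop_id length_take min.absorb2)
  qed
  show "(\<lambda>(ys, k). insert_at k (Suc m) ys) ` (arrangements m \<times> {..m}) = arrangements (Suc m)"
  proof (intro equalityI subsetI)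
    fix xs assume "xs \<in> (\<lambda>(ys, k). insert_at k (Suc m) ys) ` (arrangements m \<times> {..m})"
    then obtain ys k where "xs = insert_at k (Suc m) ys" "ys \<in> arrangements m" by auto
    then show "xs \<in> arrangements (Suc m)"
      using insert_max_arrangement_iff[of "take k ys" m "drop k ys"] by (simp add: insert_at_def)
  next
    fix xs assume xs: "xs \<in> arrangements (Suc m)"
    then have "Suc m \<in> set xs" by (simp add: mem_arrangements_iff)
    then obtain as bs where xs_eq: "xs = as @ Suc m # bs" by (meson split_list)
    then have ys: "as @ bs \<in> arrangements m" using xs insert_max_arrangement_iff by simp
    then have "length as \<le> m" using length_arrangement by fastforce
    moreover have "xs = insert_at (length as) (Suc m) (as @ bs)"
      by (simp add: insert_at_def xs_eq)
    ultimately show "xs \<in> (\<lambda>(ys, k). insert_at k (Suc m) ys) ` (arrangements m \<times> {..m})"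
      using ys by force
  qed
qed

lemma cyc_successions_insert_max:
  assumes "ys \<in> arrangements m" "ys = as @ bs"
  shows "cyc_successions (Suc m) (as @ Suc m # bs) = {} \<longleftrightarrow>
    cyc_successions m ys - {m} \<subseteq>
      (if as \<noteq> [] \<and> bs \<noteq> [] \<and> hd bs = cyc_succ m (last as) then {last as} else {})
    \<and> \<not> (as \<noteq> [] \<and> last as = m) \<and> \<not> (bs \<noteq> [] \<and> hd bs = 1)"
proof -
  let ?J = "if as \<noteq> [] \<and> bs \<noteq> [] \<and> hd bs = cyc_succ m (last as) then {last as} else {}"
  have as: "set as \<subseteq> {1..m}" "distinct as" and bs: "set bs \<subseteq> {1..m}"
    and disj: "set as \<inter> set bs = {}"
    using assms by (auto simp: mem_arrangements_iff)
  have max_after: "(as \<noteq> [] \<and> Suc m = cyc_succ (Suc m) (last as)) \<longleftrightarrow> (as \<noteq> [] \<and> last as = m)"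
  proof (cases "as = []")
    case False
    then have "last as \<in> {1..m}" using as last_in_set by blast
    then show ?thesis using False by (auto simp: cyc_succ_def)
  qed simp
  have max_before: "cyc_successions (Suc m) (Suc m # bs) =
      cyc_successions (Suc m) bs \<union> (if bs \<noteq> [] \<and> hd bs = 1 then {Suc m} else {})"
    by (simp add: successions_Cons cyc_succ_def)
  have "last as \<notin> cyc_successions m as" if "as \<noteq> []"
    using that successions_subset_butlast[of _ as] as(2)
    by (metis append_butlast_last_id distinct_append disjoint_iff list.set_intros(1) subsetD)
  moreover have "last as \<notin> cyc_successions m bs" if "as \<noteq> []"
    using that successions_subset[of _ bs] disj last_in_set by blast
  ultimately have "cyc_successions m as - {m} = {} \<and> cyc_successions m bs - {m} = {} \<longleftrightarrow>
      cyc_successions m ys - {m} \<subseteq> ?J"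
    unfolding assms(2) successions_append by auto
  moreover have "cyc_successions (Suc m) (as @ Suc m # bs) = cyc_successions (Suc m) as \<union>
      cyc_successions (Suc m) (Suc m # bs) \<union>
      (if as \<noteq> [] \<and> Suc m = cyc_succ (Suc m) (last as) then {last as} else {})"
    by (simp add: successions_append)
  ultimately show ?thesis
    unfolding max_before max_after cyc_successions_Suc[OF as(1)] cyc_successions_Suc[OF bs]
    by auto
qed

text \<open>Gap \<open>k\<close> of \<open>ys\<close> lies between \<open>ys ! (k - 1)\<close> and \<open>ys ! k\<close>;
  gap \<open>0\<close> is the front and gap \<open>m\<close> the end.\<close>

definition good_gap :: "nat \<Rightarrow> nat list \<Rightarrow> nat \<Rightarrow> bool" where
  "good_gap m ys k \<longleftrightarrow>
    cyc_successions m ys - {m} \<subseteq>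
      (if 0 < k \<and> k < m \<and> ys ! k = cyc_succ m (ys ! (k - 1)) then {ys ! (k - 1)} else {})
    \<and> \<not> (0 < k \<and> ys ! (k - 1) = m) \<and> \<not> (k < m \<and> ys ! k = 1)"

lemma succ_free_insert_at_iff:
  assumes "ys \<in> arrangements m" "k \<le> m"
  shows "cyc_successions (Suc m) (insert_at k (Suc m) ys) = {} \<longleftrightarrow> good_gap m ys k"
proof -
  have len: "length ys = m" using length_arrangement[OF assms(1)] .
  have "take k ys \<noteq> [] \<longleftrightarrow> 0 < k" "drop k ys \<noteq> [] \<longleftrightarrow> k < m" using len assms(2) by auto
  moreover have "0 < k \<Longrightarrow> last (take k ys) = ys ! (k - 1)"
    using len assms(2) by (subst last_conv_nth) auto
  moreover have "k < m \<Longrightarrow> hd (drop k ys) = ys ! k" using len by (simp add: hd_drop_conv_nth)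
  ultimately show ?thesis
    unfolding insert_at_def good_gap_def
      cyc_successions_insert_max[OF assms(1) append_take_drop_id[of k ys, symmetric]]
    by (cases "0 < k"; cases "k < m") auto
qed

lemma good_gap_unique_succession:
  assumes "good_gap m ys k" "cyc_successions m ys - {m} \<noteq> {}"
  shows "cyc_successions m ys - {m} = {ys ! (k - 1)} \<and> 0 < k \<and> k < m \<and> ys ! k = cyc_succ m (ys ! (k - 1))"
  using assms unfolding good_gap_def by (auto split: if_splits)

lemma card_good_gaps_no_succession:
  assumes ys: "ys \<in> arrangements m" and "1 \<le> m" and B: "cyc_successions m ys - {m} = {}"
  shows "card {k. k \<le> m \<and> good_gap m ys k} = (if m \<in> cyc_successions m ys then m else m - 1)"
proof -
  have len: "length ys = m" and dist: "distinct ys" and set: "set ys = {1..m}"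
    using ys length_arrangement by (auto simp: mem_arrangements_iff)
  obtain i where i: "i < m" "ys ! i = m"
    using set len \<open>1 \<le> m\<close> by (metis atLeastAtMost_iff in_set_conv_nth order_refl)
  obtain j where j: "j < m" "ys ! j = 1"
    using set len \<open>1 \<le> m\<close> by (metis atLeastAtMost_iff in_set_conv_nth order_refl)
  have "good_gap m ys k \<longleftrightarrow> k \<noteq> Suc i \<and> k \<noteq> j" if "k \<le> m" for k
  proof -
    have "0 < k \<and> ys ! (k - 1) = m \<longleftrightarrow> k = Suc i"
      using that i len dist by (auto simp: nth_eq_iff_index_eq)
    moreover have "k < m \<and> ys ! k = 1 \<longleftrightarrow> k = j"
      using j len dist nth_eq_iff_index_eq[of ys k j] by auto
    ultimately show ?thesis unfolding good_gap_def B by simp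
  qed
  then have gaps: "{k. k \<le> m \<and> good_gap m ys k} = {..m} - {Suc i, j}" by auto
  \<comment> \<open>the two excluded gaps coincide exactly when \<open>m\<close> is followed by \<open>1\<close>\<close>
  have "m \<in> cyc_successions m ys \<longleftrightarrow> Suc i < m \<and> ys ! Suc i = 1"
    using i len dist nth_eq_iff_index_eq[of ys _ i] by (auto simp: mem_successions_iff cyc_succ_def)
  also have "\<dots> \<longleftrightarrow> Suc i = j" using j len dist nth_eq_iff_index_eq[of ys "Suc i" j] by auto
  moreover have "{Suc i, j} \<subseteq> {..m}" using i j by auto
  ultimately show ?thesis unfolding gaps by (auto simp: card_Diff_subset)
qed

lemma card_good_gaps_one_succession:
  assumes ys: "ys \<in> arrangements m" and B: "cyc_successions m ys - {m} = {u}"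
  shows "card {k. k \<le> m \<and> good_gap m ys k} = 1"
proof -
  have len: "length ys = m" and dist: "distinct ys"
    using ys length_arrangement by (auto simp: mem_arrangements_iff)
  have u: "u \<in> cyc_successions m ys" "u \<noteq> m" using B by auto
  then obtain t where t: "Suc t < m" "ys ! t = u" "ys ! Suc t = cyc_succ m u"
    using len by (auto simp: mem_successions_iff)
  have "u \<in> {1..m}" using successions_arrangement_subset[OF ys] u(1) by blast
  then have "cyc_succ m u \<noteq> 1" using cyc_succ_eq_1_iff u(2) by blast
  have "{k. k \<le> m \<and> good_gap m ys k} = {Suc t}"
  proof (intro equalityI subsetI)
    fix k assume "k \<in> {k. k \<le> m \<and> good_gap m ys k}"
    then have "ys ! (k - 1) = ys ! t" "0 < k" "k < m"
      using good_gap_unique_succession[of m ys k] B t by auto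
    then show "k \<in> {Suc t}" using t len dist by (auto simp: nth_eq_iff_index_eq)
  next
    fix k assume "k \<in> {Suc t}"
    then show "k \<in> {k. k \<le> m \<and> good_gap m ys k}"
      using t B u(2) \<open>cyc_succ m u \<noteq> 1\<close> by (auto simp: good_gap_def)
  qed
  then show ?thesis by simp
qed

lemma card_good_gaps:
  assumes "ys \<in> arrangements m" "1 \<le> m"
  shows "card {k. k \<le> m \<and> good_gap m ys k} =
    (if cyc_successions m ys = {} then m - 1 else 0) + (if cyc_successions m ys = {m} then m else 0)
    + (if card (cyc_successions m ys - {m}) = 1 then 1 else 0)"
proof -
  consider "cyc_successions m ys - {m} = {}" | u where "cyc_successions m ys - {m} = {u}"
    | "cyc_successions m ys - {m} \<noteq> {}" "card (cyc_successions m ys - {m}) \<noteq> 1"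
    by (metis card_1_singleton_iff One_nat_def)
  then show ?thesis
  proof cases
    case 1
    then have "cyc_successions m ys = {} \<or> cyc_successions m ys = {m}" by blast
    then show ?thesis using card_good_gaps_no_succession[OF assms 1] 1 by auto
  next
    case 2
    then show ?thesis using card_good_gaps_one_succession[OF assms(1) 2] by auto
  next
    case 3
    then have "{k. k \<le> m \<and> good_gap m ys k} = {}"
      using good_gap_unique_succession[of m ys] by fastforce
    then show ?thesis using 3 by auto
  qed
qed

lemma card_succ_free_Suc:
  assumes "1 \<le> m"
  shows "card (succ_free (Suc m)) = (m - 1) * card (succ_free m)
    + m * card {ys \<in> arrangements m. cyc_successions m ys = {m}}
    + card {ys \<in> arrangements m. card (cyc_successions m ys - {m}) = 1}"
proof -
  let ?gaps = "\<lambda>ys. {k. k \<le> m \<and> good_gap m ys k}"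
  have "bij_betw (\<lambda>(ys, k). insert_at k (Suc m) ys)
      {p \<in> arrangements m \<times> {..m}. good_gap m (fst p) (snd p)} (succ_free (Suc m))"
    unfolding succ_free_def
    by (rule bij_betw_Collect[OF bij_betw_insert_max]) (clarsimp simp: succ_free_insert_at_iff)
  then have "card (succ_free (Suc m)) = card (SIGMA ys:arrangements m. ?gaps ys)"
    by (auto simp: bij_betw_same_card[symmetric] intro!: arg_cong[where f = card])
  also have "\<dots> = (\<Sum>ys\<in>arrangements m. card (?gaps ys))"
    using finite_arrangements by (intro card_SigmaI) auto
  also have "\<dots> = (\<Sum>ys\<in>arrangements m.
      (if cyc_successions m ys = {} then m - 1 else 0) + (if cyc_successions m ys = {m} then m else 0)
      + (if card (cyc_successions m ys - {m}) = 1 then 1 else 0))"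
    using card_good_gaps assms by (intro sum.cong) auto
  also have "\<dots> = (m - 1) * card (succ_free m)
      + m * card {ys \<in> arrangements m. cyc_successions m ys = {m}}
      + card {ys \<in> arrangements m. card (cyc_successions m ys - {m}) = 1}"
    using finite_arrangements
    by (simp add: sum.distrib sum.inter_filter[symmetric] succ_free_def)
  finally show ?thesis .
qed

lemma card_succ_free_recurrence:
  assumes "3 \<le> m"
  shows "card (succ_free (Suc m)) = (m - 1) * card (succ_free m)
    + (2 * m - 1) * card (succ_free (m - 1)) + (m - 1) * card (succ_free (m - 2))"
proof -
  let ?A = "arrangements m" and ?B = "cyc_successions m"
  have m: "2 \<le> m" "2 \<le> m - 1" using assms by auto
  have max_only: "card {ys \<in> ?A. ?B ys = {m}} = card (succ_free (m - 1))"
    using card_singleton_successions[OF m(1), of m] m by simp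
  have "{ys \<in> ?A. card (?B ys - {m}) = 1} =
      {ys \<in> ?A. m \<notin> ?B ys \<and> card (?B ys) = 1} \<union> {ys \<in> ?A. m \<in> ?B ys \<and> card (?B ys - {m}) = 1}"
    by auto
  then have "card {ys \<in> ?A. card (?B ys - {m}) = 1} =
      card {ys \<in> ?A. m \<notin> ?B ys \<and> card (?B ys) = 1} + card {ys \<in> ?A. m \<in> ?B ys \<and> card (?B ys - {m}) = 1}"
    using finite_arrangements by (simp add: card_Un_disjoint disjoint_iff)
  also have "\<dots> = (m - 1) * card (succ_free (m - 1)) + (m - 1) * card (succ_free (m - 2))"
    using card_one_succession_not_max[OF m(1)] card_wrap_succession[OF m(1), of "\<lambda>S. card S = 1"]
      card_one_succession[OF m(2)] by (simp add: diff_diff_add numeral_2_eq_2)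
  moreover have "m * x + (m - 1) * x = (2 * m - 1) * x" for x
  proof -
    have "2 * m - 1 = m + (m - 1)" using assms by simp
    then show ?thesis by (simp only: add_mult_distrib)
  qed
  ultimately show ?thesis
    using card_succ_free_Suc[of m] assms max_only by (simp add: add_mult_distrib)
qed

lemma card_succ_free_1: "card (succ_free 1) = 1"
proof -
  have "succ_free 1 = {[1]}" unfolding succ_free_def arrangements_1 by auto
  then show ?thesis by simp
qed

lemma card_succ_free_2: "card (succ_free 2) = 0"
proof -
  have "cyc_successions 2 [1, 2] = {1}" "cyc_successions 2 [2, 1] = {2}"
    by (simp_all add: cyc_succ_def)
  then show ?thesis by (auto simp: succ_free_def arrangements_2)
qed

lemma card_succ_free_3: "card (succ_free 3) = 3"
proof -
  have "cyc_successions 2 [1, 2] = {1}" "cyc_successions 2 [2, 1] = {2}"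
    by (simp_all add: cyc_succ_def)
  then have "{ys \<in> arrangements 2. cyc_successions 2 ys = {2}} = {[2, 1]}"
    "{ys \<in> arrangements 2. card (cyc_successions 2 ys - {2}) = 1} = {[1, 2]}"
    by (auto simp: arrangements_2)
  then show ?thesis
    using card_succ_free_Suc[of 2] card_succ_free_2 by (simp add: numeral_3_eq_3)
qed

lemma forbidden_patterns_eq:
  "1 \<le> n \<Longrightarrow> forbidden_patterns n = (\<lambda>i. (i, cyc_succ n i)) ` {1..n}"
  by (auto simp: forbidden_patterns_def cyc_succ_def image_iff split: if_splits)

lemma D_eq_card_succ_free:
  assumes "1 \<le> n"
  shows "D n = card (succ_free n)"
proof -
  have "(\<forall>(i, j)\<in>forbidden_patterns n. \<not> contains_pattern xs i j) \<longleftrightarrow>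
        cyc_successions n xs = {}" if xs: "xs \<in> arrangements n" for xs
  proof -
    have "(\<forall>(i, j)\<in>forbidden_patterns n. \<not> contains_pattern xs i j) \<longleftrightarrow>
          (\<forall>i\<in>{1..n}. i \<notin> cyc_successions n xs)"
      by (simp add: forbidden_patterns_eq[OF assms] contains_pattern_def mem_successions_iff)
    then show ?thesis using successions_arrangement_subset[OF xs, of "cyc_succ n"] by blast
  qed
  then show ?thesis using assms by (auto simp: D_def succ_free_def intro!: arg_cong[where f = card])
qed

lemma D_small: "D 0 = 0" "D 1 = 1" "D 2 = 0" "D 3 = 3"
  using D_eq_card_succ_free[of 1] D_eq_card_succ_free[of 2] D_eq_card_succ_free[of 3]
    card_succ_free_1 card_succ_free_2 card_succ_free_3 by (simp_all add: D_def)

lemma D_recurrence: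
  assumes "3 \<le> m"
  shows "D (Suc m) = (m - 1) * D m + (2 * m - 1) * D (m - 1) + (m - 1) * D (m - 2)"
  using card_succ_free_recurrence[OF assms] assms by (simp add: D_eq_card_succ_free)

theorem corollary3p3:
  fixes n :: nat
  assumes "n \<ge> 2"
  shows "int (D n) = int (n - 1) * (int (D (n - 1)) + int (D (n - 2))) + (-1) ^ (n - 1)"
  using assms
proof (induction n rule: nat_induct_at_least)
  case base
  then show ?case using D_small by simp
next
  case (Suc n)
  show ?case
  proof (cases "n = 2")
    case True
    then show ?thesis using D_small by (simp add: numeral_eq_Suc)
  next
    case False
    then have n: "3 \<le> n" using Suc.hyps by simp
    have rec: "int (D (Suc n)) = (int n - 1) * int (D n) + (2 * int n - 1) * int (D (n - 1))
        + (int n - 1) * int (D (n - 2))"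
      using D_recurrence[OF n] n by (simp add: of_nat_diff)
    have IH: "int (D n) = (int n - 1) * (int (D (n - 1)) + int (D (n - 2))) + (-1) ^ (n - 1)"
      using Suc.IH n by (simp add: of_nat_diff)
    have sign: "(-1 :: int) ^ n = - ((-1) ^ (n - 1))"
      using n by (cases n) simp_all
    have "(int n - 1) * int (D (n - 2)) = int (D n) - (-1) ^ (n - 1) - (int n - 1) * int (D (n - 1))"
      by (simp add: IH algebra_simps)
    then have "int (D (Suc n)) = (int n - 1) * int (D n) + (2 * int n - 1) * int (D (n - 1))
        + (int (D n) - (-1) ^ (n - 1) - (int n - 1) * int (D (n - 1)))"
      using rec by simp
    also have "\<dots> = int n * (int (D n) + int (D (n - 1))) + (-1) ^ n"
      using sign by (simp add: algebra_simps)
    finally show ?thesis by simp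
  qed
qed

end
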